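(* Let $q$ be a prime power and $k\ge3$, $u\ge2$, $h\ge1$ integers. Let $U_1,\dots,U_h$ be $u$-dimensional subspaces of $\mathbf F_q^k$ with $U_i\cap U_j=\{0\}$ for $i\ne j$, and assume $q^k-q^{k-1}>h(q^u-1)$. Let $U$ be the set of nonzero vectors of $\mathbf F_q^k$ not in $U_1\cup\dots\cup U_h$, let $\widetilde G$ be a matrix whose columns consist of exactly one representative of each class $\{\lambda\mathbf v:\lambda\in\mathbf F_q^*\}$, $\mathbf v\in U$, and let $\mathbf C$ be the linear code with generator matrix $\widetilde G$. Suppose $\mathbf C$ has parameters $\big[\frac{(q^k-1)-h(q^u-1)}{q-1},k,d=q^{k-1}-hq^{u-1}\big]_q$. If $i_h+u>\sum_{i=1}^{k-u}\lfloor h/q^i\rfloor$, then $\mathbf C$ is distance optimal.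
   Context: For a positive integer $h$ with $q$-adic expansion $h=h_{m-1}q^{m-1}+\dots+h_0$ ($0\le h_i<q$), $i_h$ denotes the least index $i\ge0$ with $h_i>0$. A linear $[n,k,d]_q$ code is distance optimal if no linear $[n,k,d+1]_q$ code exists. *)

theory Defs
  imports Complex_Main "HOL-Library.Function_Algebras" "HOL-Library.Cardinality"
begin

text \<open>Vectors over a finite field 'a are modelled as functions nat => 'a;
  the space F_q^n is the set of those vanishing at all indices >= n.
  Scalar multiplication is pointwise.\<close>

definition fscale :: "'a::field \<Rightarrow> (nat \<Rightarrow> 'a) \<Rightarrow> (nat \<Rightarrow> 'a)" where
  "fscale c v = (\<lambda>i. c * v i)"

lemma vector_space_fscale: "vector_space (fscale :: 'a::field \<Rightarrow> _)"
  by unfold_locales (auto simp: fscale_def fun_eq_iff algebra_simps)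

definition vecs :: "nat \<Rightarrow> (nat \<Rightarrow> 'a::field) set" where
  "vecs n = {v. \<forall>i\<ge>n. v i = 0}"

definition is_subspace_of :: "(nat \<Rightarrow> 'a::field) set \<Rightarrow> nat \<Rightarrow> bool" where
  "is_subspace_of V n \<longleftrightarrow> V \<subseteq> vecs n \<and> Modules.module.subspace fscale V"

definition vdim :: "(nat \<Rightarrow> 'a::field) set \<Rightarrow> nat" where
  "vdim V = Vector_Spaces.vector_space.dim fscale V"

definition hweight :: "(nat \<Rightarrow> 'a::zero) \<Rightarrow> nat" where
  "hweight v = card {i. v i \<noteq> 0}"

definition min_dist :: "(nat \<Rightarrow> 'a::zero) set \<Rightarrow> nat" where
  "min_dist C = Min {hweight c | c. c \<in> C \<and> c \<noteq> 0}"

definition lin_code :: "nat \<Rightarrow> nat \<Rightarrow> (nat \<Rightarrow> 'a::field) set \<Rightarrow> bool" where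
  "lin_code n k C \<longleftrightarrow> is_subspace_of C n \<and> vdim C = k"

definition lin_code_nkd :: "nat \<Rightarrow> nat \<Rightarrow> nat \<Rightarrow> (nat \<Rightarrow> 'a::field) set \<Rightarrow> bool" where
  "lin_code_nkd n k d C \<longleftrightarrow> lin_code n k C \<and> min_dist C = d"

definition distance_optimal :: "nat \<Rightarrow> nat \<Rightarrow> nat \<Rightarrow> (nat \<Rightarrow> 'a::field) set \<Rightarrow> bool" where
  "distance_optimal n k d C \<longleftrightarrow> lin_code_nkd n k d C \<and>
     \<not> (\<exists>C' :: (nat \<Rightarrow> 'a) set. lin_code n k C' \<and> min_dist C' \<ge> d + 1)"

text \<open>Code generated by the k x N matrix whose j-th column is gs!j:
  codewords (x . g_0, ..., x . g_{N-1}) for messages x in F_q^k.\<close>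
definition gen_code :: "nat \<Rightarrow> (nat \<Rightarrow> 'a::field) list \<Rightarrow> (nat \<Rightarrow> 'a) set" where
  "gen_code k gs = {(\<lambda>j. if j < length gs then (\<Sum>i<k. x i * (gs ! j) i) else 0) | x. x \<in> vecs k}"

text \<open>i_h: least index of a nonzero digit in the q-adic expansion of h.\<close>
definition least_digit_index :: "nat \<Rightarrow> nat \<Rightarrow> nat" where
  "least_digit_index q h = (LEAST i. (h div q ^ i) mod q \<noteq> 0)"

end

(*
  The construction enters only through the parameters [n, k, d]_q of C (hypothesis params);
  distance optimality then follows from the Griesmer bound
  n >= (SUM i<k. ceil((d + 1) / q^i)) for every linear [n, k, d + 1]_q code.

  The bound is proved by the residual-code induction: zeroing the coordinates in the support
  of a minimum-weight word c is a linear map with kernel F_q c, and every nonzero word of its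
  image has weight at least ceil(wt c / q).

  With e = k - u and D = q^e - h we have d + 1 = D q^(u-1) + 1, so the Griesmer sum is
  SUM i<u. (D q^(u-1-i) + 1)  +  SUM j=1..e. (D div q^j + 1), and
  D div q^j = q^(e-j) - h div q^j - [q^j does not divide h], where q^j divides h for j <= i_h.
  Multiplying by q - 1 and comparing with n (q - 1) <= q^k - 1 - h (q^u - 1) shows that the
  sum exceeds n as soon as i_h + u > SUM i=1..e. h div q^i.
*)
theory Submission
  imports Defs "HOL-Library.FuncSet"
begin

definition ceil_div :: "nat \<Rightarrow> nat \<Rightarrow> nat" where
  "ceil_div a b = (a + b - 1) div b"

lemma ceil_div_le_iff:
  assumes "0 < b"
  shows "ceil_div a b \<le> x \<longleftrightarrow> a \<le> b * x"
proof -
  have "ceil_div a b \<le> x \<longleftrightarrow> a + b - 1 < Suc x * b"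
    unfolding ceil_div_def using assms by (simp add: less_Suc_eq_le[symmetric] div_less_iff_less_mult)
  also have "\<dots> \<longleftrightarrow> a \<le> b * x"
    using assms by (auto simp: algebra_simps)
  finally show ?thesis .
qed

lemma le_mult_ceil_div: "0 < b \<Longrightarrow> a \<le> b * ceil_div a b"
  using ceil_div_le_iff by blast

lemma ceil_div_Suc_0 [simp]: "ceil_div a (Suc 0) = a"
  by (simp add: ceil_div_def)

lemma ceil_div_ceil_div:
  assumes "0 < p" "0 < r"
  shows "ceil_div (ceil_div a p) r = ceil_div a (p * r)"
proof (rule order_antisym)
  have "a \<le> p * (r * ceil_div a (p * r))"
    using le_mult_ceil_div[of "p * r" a] assms by (simp add: mult.assoc)
  then show "ceil_div (ceil_div a p) r \<le> ceil_div a (p * r)"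
    using assms by (simp add: ceil_div_le_iff)
  have "a \<le> p * ceil_div a p"
    using assms(1) by (rule le_mult_ceil_div)
  also have "\<dots> \<le> p * (r * ceil_div (ceil_div a p) r)"
    using le_mult_ceil_div[of r "ceil_div a p"] assms by simp
  finally show "ceil_div a (p * r) \<le> ceil_div (ceil_div a p) r"
    using assms by (simp add: ceil_div_le_iff mult.assoc)
qed

lemma ceil_div_mult_Suc:
  assumes "0 < m" "0 < p"
  shows "ceil_div (x * m + 1) (m * p) = x div p + 1"
proof -
  have "ceil_div (x * m + 1) (m * p) = (m * (x + p)) div (m * p)"
    unfolding ceil_div_def using assms by (simp add: algebra_simps)
  also have "\<dots> = x div p + 1"
    using assms by simp
  finally show ?thesis .
qed

lemma one_less_card_field: "1 < CARD('a::{finite,field})"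
proof -
  have "card {0 :: 'a, 1} \<le> CARD('a)"
    by (rule card_mono) auto
  then show ?thesis by simp
qed

section \<open>Subspaces of a vector space over a finite field\<close>

interpretation vs: vector_space fscale
  by (rule vector_space_fscale)

lemma finite_supported_funs:
  "finite T \<Longrightarrow> finite {x :: nat \<Rightarrow> 'a::{finite,zero}. {i. x i \<noteq> 0} \<subseteq> T}"
  by (rule finite_subset[OF _ finite_set_of_finite_funs[of T UNIV 0]]) auto

lemma card_span_independent:
  fixes B :: "(nat \<Rightarrow> 'a::{finite,field}) set"
  assumes "finite B" "vs.independent B"
  shows "card (vs.span B) = CARD('a) ^ card B"
proof -
  define comb where "comb u = (\<Sum>v\<in>B. fscale (u v) v)" for u :: "(nat \<Rightarrow> 'a) \<Rightarrow> 'a"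
  let ?coeffs = "B \<rightarrow>\<^sub>E (UNIV :: 'a set)"
  have "vs.span B = range comb"
    unfolding comb_def by (rule vs.span_finite[OF assms(1)])
  also have "range comb = comb ` ?coeffs"
  proof (intro subset_antisym subsetI)
    fix x assume "x \<in> range comb"
    then obtain u where "x = comb u" by blast
    also have "comb u = comb (restrict u B)"
      unfolding comb_def by (rule sum.cong) auto
    finally show "x \<in> comb ` ?coeffs" by simp
  qed blast
  finally have span_eq: "vs.span B = comb ` ?coeffs" .
  have "inj_on comb ?coeffs"
  proof (rule inj_onI)
    fix u u' assume u: "u \<in> ?coeffs" "u' \<in> ?coeffs" and "comb u = comb u'"
    then have "(\<Sum>v\<in>B. fscale (u v - u' v) v) = 0"
      by (simp add: comb_def vs.scale_left_diff_distrib sum_subtractf)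
    then have "\<forall>v\<in>B. u v - u' v = 0"
      using assms(2) unfolding vs.dependent_finite[OF assms(1)]
      by (auto dest!: spec[of _ "\<lambda>v. u v - u' v"])
    then show "u = u'"
      using u by (auto intro: PiE_ext)
  qed
  then have "card (vs.span B) = card ?coeffs"
    unfolding span_eq by (rule card_image)
  also have "\<dots> = CARD('a) ^ card B"
    using assms(1) by (simp add: card_PiE)
  finally show ?thesis .
qed

lemma card_subspace:
  fixes C :: "(nat \<Rightarrow> 'a::{finite,field}) set"
  assumes "vs.subspace C" "finite C"
  shows "card C = CARD('a) ^ vs.dim C"
proof -
  obtain B where B: "B \<subseteq> C" "vs.independent B" "C \<subseteq> vs.span B" "card B = vs.dim C"
    by (rule vs.basis_exists)
  then have "vs.span B = C"
    using assms(1) by (intro vs.span_subspace)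
  then show ?thesis
    using card_span_independent[of B] B assms(2) finite_subset by metis
qed

section \<open>Residual codes and the Griesmer bound\<close>

text \<open>Deleting the coordinates in \<open>S\<close> is modelled by setting them to zero; the length of
  a code is then the size of a set \<open>T\<close> containing the supports of all its words.\<close>

definition puncture :: "nat set \<Rightarrow> (nat \<Rightarrow> 'a::zero) \<Rightarrow> nat \<Rightarrow> 'a" where
  "puncture S x i = (if i \<in> S then 0 else x i)"

lemma puncture_add:
  fixes x y :: "nat \<Rightarrow> 'a::monoid_add"
  shows "puncture S (x + y) = puncture S x + puncture S y"
  by (auto simp: puncture_def fun_eq_iff)

lemma puncture_diff:
  fixes x y :: "nat \<Rightarrow> 'a::group_add"
  shows "puncture S (x - y) = puncture S x - puncture S y"
  by (auto simp: puncture_def fun_eq_iff)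

lemma puncture_fscale: "puncture S (fscale a x) = fscale a (puncture S x)"
  by (simp add: puncture_def fscale_def fun_eq_iff)

lemma subspace_puncture_image:
  "vs.subspace C \<Longrightarrow> vs.subspace (puncture S ` C)"
  by (rule module_hom.subspace_image)
    (auto simp: module_hom_iff vs.module_axioms puncture_add puncture_fscale)

lemma sum_card_fibres:
  "finite A \<Longrightarrow> (\<Sum>b\<in>(UNIV :: 'b::finite set). card {a \<in> A. f a = b}) = card A"
  using sum.group[of A UNIV f "\<lambda>_. 1 :: nat"] by simp

lemma obtain_min_weight_word:
  fixes C :: "(nat \<Rightarrow> 'a::zero) set"
  assumes "1 < card C"
  obtains c where "c \<in> C" "c \<noteq> 0" "\<And>x. x \<in> C \<Longrightarrow> x \<noteq> 0 \<Longrightarrow> hweight c \<le> hweight x"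
proof -
  have "\<exists>x \<in> C. x \<noteq> 0"
  proof (rule ccontr)
    assume "\<not> (\<exists>x \<in> C. x \<noteq> 0)"
    then have "card C \<le> card {0 :: nat \<Rightarrow> 'a}"
      by (intro card_mono) auto
    then show False
      using assms by simp
  qed
  then show thesis
    using ex_has_least_nat[of "\<lambda>x. x \<in> C \<and> x \<noteq> 0" _ hweight] that by blast
qed

locale min_weight_word =
  fixes C :: "(nat \<Rightarrow> 'a::{finite,field}) set" and T :: "nat set" and c :: "nat \<Rightarrow> 'a"
  assumes subspace_C: "vs.subspace C"
    and finite_T: "finite T"
    and supported: "\<And>x. x \<in> C \<Longrightarrow> {i. x i \<noteq> 0} \<subseteq> T"
    and c_in_C: "c \<in> C" and c_nonzero: "c \<noteq> 0"
    and c_min: "\<And>x. x \<in> C \<Longrightarrow> x \<noteq> 0 \<Longrightarrow> hweight c \<le> hweight x"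
begin

abbreviation S :: "nat set" where
  "S \<equiv> {i. c i \<noteq> 0}"

abbreviation residual :: "(nat \<Rightarrow> 'a) set" where
  "residual \<equiv> puncture S ` C"

lemma finite_C: "finite C"
  by (rule finite_subset[OF _ finite_supported_funs[OF finite_T]]) (use supported in blast)

lemma finite_support: "x \<in> C \<Longrightarrow> finite {i. x i \<noteq> 0}"
  using supported finite_T by (rule finite_subset)

lemma c_nonzero_at: obtains i0 where "c i0 \<noteq> 0"
  using c_nonzero by (auto simp: fun_eq_iff)

lemma hweight_c: "hweight c = card S"
  by (simp add: hweight_def)

lemma puncture_c: "puncture S c = 0"
  by (simp add: puncture_def fun_eq_iff)

lemma residual_supported:
  assumes "y \<in> residual"
  shows "{i. y i \<noteq> 0} \<subseteq> T - S"
proof -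
  obtain x where "x \<in> C" "y = puncture S x"
    using assms by blast
  then show ?thesis
    using supported by (fastforce simp: puncture_def split: if_splits)
qed

lemma puncture_eq_0_imp_multiple:
  assumes "z \<in> C" and "puncture S z = 0"
  shows "\<exists>a. z = fscale a c"
proof -
  obtain i0 where i0: "c i0 \<noteq> 0" by (rule c_nonzero_at)
  define a where "a = z i0 / c i0"
  have z_outside: "z i = 0" if "c i = 0" for i
    using fun_cong[OF assms(2), of i] that by (simp add: puncture_def)
  have "z - fscale a c \<in> C"
    using assms(1) c_in_C subspace_C by (simp add: vs.subspace_diff vs.subspace_scale)
  moreover have "hweight (z - fscale a c) < hweight c"
  proof -
    have "{i. (z - fscale a c) i \<noteq> 0} \<subseteq> S - {i0}"
      using i0 z_outside by (auto simp: fscale_def a_def)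
    then have "hweight (z - fscale a c) \<le> card (S - {i0})"
      unfolding hweight_def using finite_support[OF c_in_C] by (simp add: card_mono)
    also have "\<dots> < hweight c"
      using finite_support[OF c_in_C] i0 unfolding hweight_c by (intro card_Diff1_less) auto
    finally show ?thesis .
  qed
  ultimately have "z - fscale a c = 0"
    using c_min leD by meson
  then show ?thesis by auto
qed

lemma card_le_card_residual: "card C \<le> CARD('a) * card residual"
proof -
  obtain i0 where i0: "c i0 \<noteq> 0" by (rule c_nonzero_at)
  have "inj_on (\<lambda>x. (puncture S x, x i0)) C"
  proof (rule inj_onI)
    fix x y assume xy: "x \<in> C" "y \<in> C" "(puncture S x, x i0) = (puncture S y, y i0)"
    have "x - y \<in> C"
      using xy subspace_C by (simp add: vs.subspace_diff)
    moreover have "puncture S (x - y) = 0"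
      using xy by (simp add: puncture_diff)
    ultimately obtain a where a: "x - y = fscale a c"
      using puncture_eq_0_imp_multiple by blast
    then have "a * c i0 = 0"
      using xy by (auto simp: fscale_def dest: fun_cong[of _ _ i0])
    then show "x = y"
      using a i0 by (simp add: fscale_def fun_eq_iff)
  qed
  then have "card C \<le> card (residual \<times> (UNIV :: 'a set))"
    by (rule card_inj_on_le) (auto simp: finite_C)
  then show ?thesis
    by (simp add: card_cartesian_product mult.commute)
qed

lemma card_T: "card T = hweight c + card (T - S)"
  using supported[OF c_in_C] finite_T unfolding hweight_c
  by (metis card_Diff_subset card_mono finite_subset le_add_diff_inverse)

lemma card_agree_le_residual_weight:
  assumes "x \<in> C" and "puncture S x \<noteq> 0"
  shows "card {i \<in> S. x i / c i = a} \<le> hweight (puncture S x)"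
proof -
  let ?y = "puncture S x" and ?agree = "{i \<in> S. x i / c i = a}"
  have finite_S: "finite S"
    using finite_support[OF c_in_C] .
  have agree_S: "?agree \<subseteq> S"
    by auto
  have finite_y: "finite {i. ?y i \<noteq> 0}"
    using finite_support[OF assms(1)] by (auto simp: puncture_def elim: finite_subset[rotated])
  have "x - fscale a c \<in> C"
    using assms(1) c_in_C subspace_C by (simp add: vs.subspace_diff vs.subspace_scale)
  moreover have "x - fscale a c \<noteq> 0"
  proof
    assume "x - fscale a c = 0"
    then have "?y = fscale a (puncture S c)"
      by (simp add: puncture_fscale[symmetric])
    then show False
      using assms(2) by (simp add: puncture_c fscale_def fun_eq_iff)
  qed
  ultimately have "hweight c \<le> hweight (x - fscale a c)"
    by (rule c_min)
  also have "{i. (x - fscale a c) i \<noteq> 0} = {i. ?y i \<noteq> 0} \<union> (S - ?agree)"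
  proof (intro set_eqI)
    fix i
    show "i \<in> {i. (x - fscale a c) i \<noteq> 0} \<longleftrightarrow> i \<in> {i. ?y i \<noteq> 0} \<union> (S - ?agree)"
      by (cases "c i = 0") (simp_all add: puncture_def fscale_def divide_eq_eq)
  qed
  then have "hweight (x - fscale a c) = hweight ?y + card (S - ?agree)"
    unfolding hweight_def using finite_S finite_y
    by (simp add: card_Un_disjoint puncture_def disjoint_iff)
  also have "card (S - ?agree) = hweight c - card ?agree"
    using finite_S agree_S unfolding hweight_c by (intro card_Diff_subset) (auto intro: finite_subset)
  finally show ?thesis
    using card_mono[OF finite_S agree_S] unfolding hweight_c by linarith
qed

text \<open>Each coordinate of the support of \<open>c\<close> is cancelled in exactly one of the \<open>q\<close>
  words \<open>x - a c\<close>.\<close>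

lemma min_weight_le_residual_weight:
  assumes "y \<in> residual" and "y \<noteq> 0"
  shows "hweight c \<le> CARD('a) * hweight y"
proof -
  obtain x where x: "x \<in> C" "y = puncture S x"
    using assms(1) by blast
  have "hweight c = (\<Sum>a\<in>UNIV. card {i \<in> S. x i / c i = a})"
    using sum_card_fibres[OF finite_support[OF c_in_C], of "\<lambda>i. x i / c i"]
    by (simp add: hweight_c)
  also have "\<dots> \<le> (\<Sum>a\<in>(UNIV :: 'a set). hweight y)"
    using card_agree_le_residual_weight[OF x(1)] x(2) assms(2) by (intro sum_mono) simp
  finally show ?thesis
    by simp
qed

end

theorem griesmer_bound:
  fixes C :: "(nat \<Rightarrow> 'a::{finite,field}) set"
  assumes "vs.subspace C" and "finite T" and "\<And>x. x \<in> C \<Longrightarrow> {i. x i \<noteq> 0} \<subseteq> T"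
    and "CARD('a) ^ m \<le> card C" and "\<And>x. x \<in> C \<Longrightarrow> x \<noteq> 0 \<Longrightarrow> d \<le> hweight x"
  shows "(\<Sum>i<m. ceil_div d (CARD('a) ^ i)) \<le> card T"
  using assms
proof (induction m arbitrary: C T d)
  case 0
  then show ?case by simp
next
  case (Suc m)
  let ?q = "CARD('a)"
  have q_pos: "0 < ?q" by simp
  have "1 < ?q ^ Suc m"
    using one_less_card_field[where 'a='a] by (rule one_less_power) simp
  then have "1 < card C"
    using Suc.prems(4) by linarith
  then obtain c where c: "c \<in> C" "c \<noteq> 0"
    and c_min: "\<And>x. x \<in> C \<Longrightarrow> x \<noteq> 0 \<Longrightarrow> hweight c \<le> hweight x"
    using obtain_min_weight_word by blast
  interpret min_weight_word C T c
    using Suc.prems(1-3) c c_min by unfold_locales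
  have "?q * ?q ^ m \<le> ?q * card residual"
    using Suc.prems(4) card_le_card_residual by (simp only: power_Suc order_trans)
  then have "?q ^ m \<le> card residual"
    using q_pos by simp
  moreover have "ceil_div d ?q \<le> hweight y" if "y \<in> residual" "y \<noteq> 0" for y
    using Suc.prems(5)[OF c(1,2)] min_weight_le_residual_weight[OF that] q_pos
    by (simp add: ceil_div_le_iff)
  ultimately have IH: "(\<Sum>i<m. ceil_div (ceil_div d ?q) (?q ^ i)) \<le> card (T - S)"
    using Suc.IH[of residual "T - S"] subspace_puncture_image[OF subspace_C] finite_T
      residual_supported by blast
  have "(\<Sum>i<Suc m. ceil_div d (?q ^ i)) = d + (\<Sum>i<m. ceil_div (ceil_div d ?q) (?q ^ i))"
    by (simp only: sum.lessThan_Suc_shift) (simp add: ceil_div_ceil_div)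
  also have "\<dots> \<le> hweight c + card (T - S)"
    using Suc.prems(5)[OF c(1,2)] IH by (rule add_mono)
  also have "\<dots> = card T"
    by (rule card_T[symmetric])
  finally show ?case .
qed

corollary griesmer_bound_lin_code:
  fixes C :: "(nat \<Rightarrow> 'a::{finite,field}) set"
  assumes "lin_code n k C" and "d \<le> min_dist C"
  shows "(\<Sum>i<k. ceil_div d (CARD('a) ^ i)) \<le> n"
proof -
  have C: "C \<subseteq> vecs n" "vs.subspace C" "vs.dim C = k"
    using assms(1) by (simp_all add: lin_code_def is_subspace_of_def vdim_def)
  have supported: "{i. x i \<noteq> 0} \<subseteq> {..<n}" if "x \<in> C" for x
    using that C(1) by (auto simp: vecs_def not_less[symmetric])
  have "finite C"
    by (rule finite_subset[OF _ finite_supported_funs[of "{..<n}"]]) (use supported in auto)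
  then have "card C = CARD('a) ^ k"
    using card_subspace[OF C(2)] C(3) by simp
  moreover have "d \<le> hweight x" if "x \<in> C" "x \<noteq> 0" for x
  proof -
    have "min_dist C \<le> hweight x"
      unfolding min_dist_def using \<open>finite C\<close> that by (intro Min_le) auto
    then show ?thesis
      using assms(2) by simp
  qed
  ultimately show ?thesis
    using griesmer_bound[of C "{..<n}" k d] C(2) supported by simp
qed

section \<open>The Griesmer sum for minimum distance \<open>q^(k-1) - h q^(u-1) + 1\<close>\<close>

lemma geometric_sum_nat: "(q - 1) * (\<Sum>i<n. q ^ i) = q ^ n - (1::nat)"
proof (induction n)
  case (Suc n)
  show ?case
  proof (cases "q = 0")
    case False
    then have "1 \<le> q ^ n" "q ^ n \<le> q * q ^ n" by simp_all
    moreover have "(q - 1) * q ^ n = q * q ^ n - q ^ n"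
      by (simp add: diff_mult_distrib)
    ultimately show ?thesis
      using Suc.IH by (simp add: distrib_left)
  qed simp
qed simp

lemma diff_div_add_div:
  fixes P Q h :: nat
  assumes "Q dvd P" and "h \<le> P"
  shows "(P - h) div Q + h div Q + (if Q dvd h then 0 else 1) = P div Q"
proof (cases "Q = 0")
  case Q_pos: False
  obtain R where P: "P = Q * R"
    using assms(1) by blast
  obtain a b where h: "h = Q * a + b" and "b < Q"
    using Q_pos div_mult_mod_eq[of h Q] mod_less_divisor by (metis mult.commute neq0_conv)
  have h_div: "h div Q = a"
    using h \<open>b < Q\<close> by simp
  have h_dvd: "Q dvd h \<longleftrightarrow> b = 0"
    using h \<open>b < Q\<close> by (auto simp: dvd_add_right_iff dest: dvd_imp_le)
  show ?thesis
  proof (cases "b = 0")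
    case True
    then have "P - h = Q * (R - a)"
      using h P by (simp add: diff_mult_distrib2)
    moreover have "Q * a \<le> Q * R"
      using h P assms(2) by linarith
    then have "a \<le> R"
      using Q_pos by simp
    ultimately show ?thesis
      using True Q_pos h_div h_dvd P by simp
  next
    case False
    have "Q * a < Q * R"
      using h P assms(2) False by linarith
    then obtain t where t: "R = Suc a + t"
      using less_imp_Suc_add by auto
    then have "P - h = Q * t + (Q - b)"
      using h P \<open>b < Q\<close> by (simp add: algebra_simps)
    then have "(P - h) div Q = t"
      using False Q_pos by simp
    then show ?thesis
      using False h_div h_dvd P t Q_pos by simp
  qed
qed (use assms in simp)

lemma pow_dvd_if_le_least_digit_index:
  "j \<le> least_digit_index q h \<Longrightarrow> q ^ j dvd h"
proof (induction j)
  case (Suc j)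
  then have j: "j < (LEAST i. (h div q ^ i) mod q \<noteq> 0)"
    by (simp add: least_digit_index_def)
  have "q ^ j dvd h"
    using Suc by simp
  have "q dvd h div q ^ j"
    using not_less_Least[OF j] by (simp add: mod_eq_0_iff_dvd)
  then have "q ^ j * q dvd q ^ j * (h div q ^ j)"
    by (rule mult_dvd_mono[OF dvd_refl])
  also have "q ^ j * (h div q ^ j) = h"
    using \<open>q ^ j dvd h\<close> by simp
  finally show ?case
    by (simp only: power_Suc2)
qed simp

lemma least_digit_index_less:
  assumes "0 < h" and "h < q ^ e"
  shows "least_digit_index q h < e"
proof (rule ccontr)
  assume "\<not> least_digit_index q h < e"
  then have "q ^ e dvd h"
    by (simp add: pow_dvd_if_le_least_digit_index)
  then have "q ^ e \<le> h"
    using assms(1) by (rule dvd_imp_le)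
  then show False
    using assms(2) by simp
qed

lemma nondivisible_count_le:
  "(\<Sum>j<e. if q ^ Suc j dvd h then 0 else 1) \<le> e - least_digit_index q h"
proof -
  have "(\<Sum>j<e. if q ^ Suc j dvd h then 0 else 1)
      \<le> (\<Sum>j<e. if least_digit_index q h \<le> j then 1 else (0::nat))"
  proof (rule sum_mono)
    fix j
    show "(if q ^ Suc j dvd h then 0 else 1) \<le> (if least_digit_index q h \<le> j then 1 else (0::nat))"
      using pow_dvd_if_le_least_digit_index[of "Suc j" q h] by auto
  qed
  also have "\<dots> = card ({..<e} \<inter> {j. least_digit_index q h \<le> j})"
    by (simp add: sum.If_cases)
  also have "{..<e} \<inter> {j. least_digit_index q h \<le> j} = {least_digit_index q h..<e}"
    by auto
  finally show ?thesis by simp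
qed

lemma sum_lessThan_add: "(\<Sum>i<m + (n::nat). f i) = (\<Sum>i<m. f i) + (\<Sum>j<n. f (m + j))"
  by (induction n) (simp_all add: add.assoc)

lemma griesmer_sum_shifted:
  fixes q u e D :: nat
  assumes "0 < q" and "0 < u"
  shows "(\<Sum>i<u + e. ceil_div (D * q ^ (u - 1) + 1) (q ^ i))
       = D * (\<Sum>i<u. q ^ i) + u + (\<Sum>j<e. D div q ^ Suc j) + e"
proof -
  let ?g = "\<lambda>i. ceil_div (D * q ^ (u - 1) + 1) (q ^ i)"
  have low: "?g i = D * q ^ (u - Suc i) + 1" if "i < u" for i
  proof -
    have "q ^ (u - 1) = q ^ (u - Suc i) * q ^ i"
      using that by (simp add: power_add[symmetric])
    then have "?g i = ceil_div (D * q ^ (u - Suc i) * q ^ i + 1) (q ^ i * 1)"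
      by (simp only: mult.assoc mult_1_right)
    also have "\<dots> = D * q ^ (u - Suc i) + 1"
      using assms(1) by (subst ceil_div_mult_Suc) simp_all
    finally show ?thesis .
  qed
  have high: "?g (u + j) = D div q ^ Suc j + 1" for j
  proof -
    have "q ^ (u + j) = q ^ (u - 1) * q ^ Suc j"
      unfolding power_add[symmetric] using assms(2) by simp
    then show ?thesis
      using ceil_div_mult_Suc[of "q ^ (u - 1)" "q ^ Suc j" D] assms by simp
  qed
  have "(\<Sum>i<u + e. ?g i) = (\<Sum>i<u. ?g i) + (\<Sum>j<e. ?g (u + j))"
    by (rule sum_lessThan_add)
  also have "(\<Sum>i<u. ?g i) = (\<Sum>i<u. D * q ^ (u - Suc i) + 1)"
    using low by (rule sum.cong[OF refl]) simp
  also have "\<dots> = D * (\<Sum>i<u. q ^ (u - Suc i)) + u"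
    by (simp only: sum.distrib sum_distrib_left) simp
  also have "(\<Sum>i<u. q ^ (u - Suc i)) = (\<Sum>i<u. q ^ i)"
    by (rule sum.nat_diff_reindex)
  also have "(\<Sum>j<e. ?g (u + j)) = (\<Sum>j<e. D div q ^ Suc j + 1)"
    using high by (rule sum.cong[OF refl])
  also have "\<dots> = (\<Sum>j<e. D div q ^ Suc j) + e"
    by (simp only: sum.distrib) simp
  finally show ?thesis by simp
qed

lemma sum_div_pow_diff:
  fixes q e h :: nat
  assumes "0 < q" and "h \<le> q ^ e"
  shows "(\<Sum>j<e. (q ^ e - h) div q ^ Suc j) + (\<Sum>j<e. h div q ^ Suc j)
       + (\<Sum>j<e. if q ^ Suc j dvd h then 0 else 1) = (\<Sum>j<e. q ^ j)"
proof -
  have "(q ^ e - h) div q ^ Suc j + h div q ^ Suc j + (if q ^ Suc j dvd h then 0 else 1)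
      = q ^ (e - Suc j)" if "j < e" for j
  proof -
    have "q ^ Suc j dvd q ^ e"
      using that by (intro le_imp_power_dvd) simp
    then show ?thesis
      using diff_div_add_div[of "q ^ Suc j" "q ^ e" h] assms that by (simp add: power_diff)
  qed
  then have "(\<Sum>j<e. (q ^ e - h) div q ^ Suc j + h div q ^ Suc j + (if q ^ Suc j dvd h then 0 else 1))
      = (\<Sum>j<e. q ^ (e - Suc j))"
    by (intro sum.cong) simp_all
  also have "\<dots> = (\<Sum>j<e. q ^ j)"
    by (rule sum.nat_diff_reindex)
  finally show ?thesis
    by (simp only: sum.distrib)
qed

lemma griesmer_sum_identity:
  fixes q u e h :: nat
  assumes "0 < q" and "0 < u" and "h \<le> q ^ e"
  shows "(q - 1) * ((\<Sum>i<u + e. ceil_div ((q ^ e - h) * q ^ (u - 1) + 1) (q ^ i))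
            + (\<Sum>j<e. h div q ^ Suc j) + (\<Sum>j<e. if q ^ Suc j dvd h then 0 else 1))
         + h * (q ^ u - 1) = q ^ (u + e) - 1 + (q - 1) * (u + e)"
proof -
  define D where "D = q ^ e - h"
  define S where "S = (\<Sum>i<u + e. ceil_div (D * q ^ (u - 1) + 1) (q ^ i))
    + (\<Sum>j<e. h div q ^ Suc j) + (\<Sum>j<e. if q ^ Suc j dvd h then 0 else 1)"
  define Gu Ge where "Gu = (\<Sum>i<u. q ^ i)" and "Ge = (\<Sum>j<e. q ^ j)"
  have "S = D * Gu + Ge + (u + e)"
    using griesmer_sum_shifted[OF assms(1,2), where e = e and D = D]
      sum_div_pow_diff[OF assms(1,3), folded D_def]
    unfolding S_def Gu_def Ge_def by simp
  then have "(q - 1) * S = D * ((q - 1) * Gu) + (q - 1) * Ge + (q - 1) * (u + e)"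
    by (simp only: distrib_left ac_simps)
  also have "\<dots> = D * (q ^ u - 1) + (q ^ e - 1) + (q - 1) * (u + e)"
    by (simp only: Gu_def Ge_def geometric_sum_nat)
  finally have sum_eq: "(q - 1) * S = D * (q ^ u - 1) + (q ^ e - 1) + (q - 1) * (u + e)" .
  have "D * (q ^ u - 1) + h * (q ^ u - 1) = q ^ e * (q ^ u - 1)"
    using assms(3) by (simp add: D_def add_mult_distrib[symmetric])
  also have "\<dots> = q ^ (u + e) - q ^ e"
    by (simp add: diff_mult_distrib2 power_add mult.commute)
  finally have "D * (q ^ u - 1) + h * (q ^ u - 1) = q ^ (u + e) - q ^ e" .
  moreover have "1 \<le> q ^ e" "q ^ e \<le> q ^ (u + e)"
    using assms(1) by (simp_all add: power_increasing)
  ultimately show ?thesis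
    using sum_eq unfolding S_def D_def by linarith
qed

lemma digit_condition_bound:
  assumes "0 < h" and "h < q ^ e"
    and "(\<Sum>i=1..e. h div q ^ i) < least_digit_index q h + u"
  shows "(\<Sum>j<e. h div q ^ Suc j) + (\<Sum>j<e. if q ^ Suc j dvd h then 0 else 1) + 1 \<le> u + e"
proof -
  have "(\<Sum>j<e. h div q ^ Suc j) = (\<Sum>i=1..e. h div q ^ i)"
    by (simp add: sum.atLeast1_atMost_eq)
  moreover have "least_digit_index q h < e"
    using assms(1,2) by (rule least_digit_index_less)
  ultimately show ?thesis
    using nondivisible_count_le[where e = e and q = q and h = h] assms(3) by linarith
qed

lemma less_of_size_condition:
  fixes q k u h :: nat
  assumes "1 \<le> q" and "1 \<le> h" and "h * (q ^ u - 1) < q ^ k - q ^ (k - 1)"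
  shows "u < k"
proof (rule ccontr)
  assume "\<not> u < k"
  then have "q ^ k \<le> q ^ u" "1 \<le> q ^ (k - 1)"
    using assms(1) by (simp_all add: power_increasing)
  moreover have "q ^ u - 1 \<le> h * (q ^ u - 1)"
    using assms(2) by simp
  ultimately show False
    using assms(3) by linarith
qed

lemma less_pow_of_size_condition:
  fixes q k u h :: nat
  assumes "1 \<le> q" and "1 \<le> u" and "u < k" and "h * (q ^ u - 1) < q ^ k - q ^ (k - 1)"
  shows "h < q ^ (k - u)"
proof (rule ccontr)
  define e where "e = k - u"
  have k: "k = u + e" and k1: "k - 1 = e + (u - 1)"
    using assms(2,3) by (simp_all add: e_def)
  assume "\<not> h < q ^ (k - u)"
  then have "q ^ e * (q ^ u - 1) \<le> h * (q ^ u - 1)"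
    by (simp add: e_def)
  moreover have "q ^ k - q ^ (k - 1) = q ^ e * (q ^ u - q ^ (u - 1))"
    unfolding k1 unfolding k by (simp add: power_add diff_mult_distrib2 mult.commute)
  moreover have "1 \<le> q ^ (u - 1)"
    using assms(1) by simp
  ultimately show False
    using assms(4) by (metis diff_le_mono2 leD le_less_trans mult_le_mono2)
qed

lemma length_lt_griesmer_sum:
  fixes q k u h :: nat
  assumes q: "2 \<le> q" and u: "1 \<le> u" and h: "1 \<le> h"
    and size: "h * (q ^ u - 1) < q ^ k - q ^ (k - 1)"
    and digits: "(\<Sum>i=1..k-u. h div q ^ i) < least_digit_index q h + u"
  shows "(q ^ k - 1 - h * (q ^ u - 1)) div (q - 1)
         < (\<Sum>i<k. ceil_div (q ^ (k - 1) - h * q ^ (u - 1) + 1) (q ^ i))"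
proof -
  have "u < k"
    by (rule less_of_size_condition[OF _ h size]) (use q in simp)
  define e where "e = k - u"
  have k: "k = u + e" and k1: "k - 1 = e + (u - 1)"
    using \<open>u < k\<close> u by (simp_all add: e_def)
  have "h < q ^ e"
    unfolding e_def by (rule less_pow_of_size_condition[OF _ u \<open>u < k\<close> size]) (use q in simp)
  define n g F B where "n = (q ^ k - 1 - h * (q ^ u - 1)) div (q - 1)"
    and "g = (\<Sum>i<k. ceil_div (q ^ (k - 1) - h * q ^ (u - 1) + 1) (q ^ i))"
    and "F = (\<Sum>j<e. h div q ^ Suc j)"
    and "B = (\<Sum>j<e. if q ^ Suc j dvd h then 0 else 1 :: nat)"
  have "q ^ (k - 1) - h * q ^ (u - 1) = (q ^ e - h) * q ^ (u - 1)"
    unfolding k1 by (simp add: power_add diff_mult_distrib)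
  then have identity: "(q - 1) * (g + F + B) + h * (q ^ u - 1) = q ^ k - 1 + (q - 1) * (u + e)"
    using griesmer_sum_identity[of q u h e] q u \<open>h < q ^ e\<close> unfolding g_def F_def B_def k by simp
  have "F + B + 1 \<le> u + e"
    using digit_condition_bound[where h = h and q = q and e = e and u = u] h \<open>h < q ^ e\<close> digits
    unfolding F_def B_def e_def by simp
  then have "(q - 1) * (F + B) + (q - 1) \<le> (q - 1) * (u + e)"
    using mult_le_mono2[of "F + B + 1" "u + e" "q - 1"] by (simp only: distrib_left mult_1_right)
  moreover have "(q - 1) * n \<le> q ^ k - 1 - h * (q ^ u - 1)"
    unfolding n_def by (metis div_times_less_eq_dividend mult.commute)
  then have "(q - 1) * n + h * (q ^ u - 1) \<le> q ^ k - 1"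
    using size by linarith
  moreover have "(q - 1) * (g + F + B) = (q - 1) * g + (q - 1) * (F + B)"
    by (simp only: add.assoc distrib_left)
  ultimately have "(q - 1) * (n + 1) \<le> (q - 1) * g"
    using identity by (simp only: distrib_left mult_1_right)
  then have "n + 1 \<le> g"
    by (rule mult_left_le_imp_le) (use q in simp)
  then show ?thesis
    unfolding n_def g_def by simp
qed

theorem theorem2p3:
  fixes Us :: "nat \<Rightarrow> (nat \<Rightarrow> 'a::{finite,field}) set"
    and gs :: "(nat \<Rightarrow> 'a) list"
    and q k u h :: nat
  assumes q_def: "q = CARD('a)"
    and k: "k \<ge> 3" and u: "u \<ge> 2" and h: "h \<ge> 1"
    and Us_sub: "\<forall>i\<in>{1..h}. is_subspace_of (Us i) k \<and> vdim (Us i) = u"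
    and Us_disj: "\<forall>i\<in>{1..h}. \<forall>j\<in>{1..h}. i \<noteq> j \<longrightarrow> Us i \<inter> Us j = {0}"
    and size: "q ^ k - q ^ (k - 1) > h * (q ^ u - 1)"
    and cols_in: "\<forall>g\<in>set gs. g \<in> vecs k - {0} - (\<Union>i\<in>{1..h}. Us i)"
    and cols_rep: "\<forall>v\<in>vecs k - {0} - (\<Union>i\<in>{1..h}. Us i).
                     \<exists>!j. j < length gs \<and> (\<exists>c. c \<noteq> 0 \<and> gs ! j = fscale c v)"
    and len: "length gs = ((q ^ k - 1) - h * (q ^ u - 1)) div (q - 1)"
    and params: "lin_code_nkd (length gs) k (q ^ (k - 1) - h * q ^ (u - 1)) (gen_code k gs)"
    and cond: "least_digit_index q h + u > (\<Sum>i=1..k-u. h div q ^ i)"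
  shows "distance_optimal (length gs) k (q ^ (k - 1) - h * q ^ (u - 1)) (gen_code k gs)"
proof -
  define n d where "n = length gs" and "d = q ^ (k - 1) - h * q ^ (u - 1)"
  have "\<not> (\<exists>C' :: (nat \<Rightarrow> 'a) set. lin_code n k C' \<and> min_dist C' \<ge> d + 1)"
  proof
    assume "\<exists>C' :: (nat \<Rightarrow> 'a) set. lin_code n k C' \<and> min_dist C' \<ge> d + 1"
    then have "(\<Sum>i<k. ceil_div (d + 1) (q ^ i)) \<le> n"
      using griesmer_bound_lin_code q_def by blast
    moreover have "n < (\<Sum>i<k. ceil_div (d + 1) (q ^ i))"
      using length_lt_griesmer_sum[of q u h k] one_less_card_field[where 'a='a] q_def u h size cond
      unfolding n_def d_def len by simp
    ultimately show False
      by simp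
  qed
  then show ?thesis
    using params unfolding distance_optimal_def n_def d_def by blast
qed

end
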